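(* Let $n\ge2$, $p\in(n-1,n]$, $x_0\in\mathbb{R}^n$, $\varepsilon_1>0$, and let $D\subset\mathbb{R}^n$ be a domain containing $B(x_0,\varepsilon_1)$. Let $A^*$ be a nondegenerate continuum in $D$. Let $r>0$ and let $C_j$, $j=1,2,\dots$, be continua in $B(x_0,\varepsilon_1)$ with $h(C_j)\ge r$ for all $j$. Then there is $R_0^*>0$ such that $M_p(\Gamma(C_j,A^*,D))\ge R_0^*$ for all $j\in\mathbb{N}$.
   Context: $B(x_0,r)$ is the open Euclidean ball. $h$ is the chordal metric, $h(x,y)=\frac{|x-y|}{\sqrt{1+|x|^2}\sqrt{1+|y|^2}}$, and $h(E)=\sup_{x,y\in E}h(x,y)$. For a path family $\Gamma$, $M_p(\Gamma)=\inf\int_{\mathbb{R}^n}\rho^p\,dm$ over Borel $\rho\ge0$ with $\int_\gamma\rho\,|dx|\ge1$ for all locally rectifiable $\gamma\in\Gamma$. $\Gamma(E,F,G)$ is the family of paths $\gamma:[s,t]\to\overline{\mathbb{R}^n}$ with $\gamma(s)\in E$, $\gamma(t)\in F$, $\gamma(\tau)\in G$ for $s<\tau<t$. *)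

theory Defs
  imports "HOL-Analysis.Analysis"
begin

definition chordal :: "'a::real_normed_vector \<Rightarrow> 'a \<Rightarrow> real" where
  "chordal x y = norm (x - y) / (sqrt (1 + (norm x)\<^sup>2) * sqrt (1 + (norm y)\<^sup>2))"

definition chordal_diam :: "'a::real_normed_vector set \<Rightarrow> real" where
  "chordal_diam E = Sup {chordal x y | x y. x \<in> E \<and> y \<in> E}"

definition continuum :: "'a::topological_space set \<Rightarrow> bool" where
  "continuum E \<longleftrightarrow> E \<noteq> {} \<and> compact E \<and> connected E"

definition nondegenerate :: "'a set \<Rightarrow> bool" where
  "nondegenerate E \<longleftrightarrow> (\<exists>x\<in>E. \<exists>y\<in>E. x \<noteq> y)"

(* a path is a triple (gamma, s, t) with gamma continuous on [s,t], s < t *)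
type_synonym 'a path_t = "(real \<Rightarrow> 'a) \<times> real \<times> real"

definition partition_sums :: "(real \<Rightarrow> 'a::metric_space) \<Rightarrow> real \<Rightarrow> real \<Rightarrow> real set" where
  "partition_sums g a b =
     {(\<Sum>i<k. dist (g (u i)) (g (u (Suc i)))) | u k.
        u 0 = a \<and> u k = b \<and> (\<forall>i<k. u i \<le> u (Suc i))}"

definition rectifiable_on :: "(real \<Rightarrow> 'a::metric_space) \<Rightarrow> real \<Rightarrow> real \<Rightarrow> bool" where
  "rectifiable_on g a b \<longleftrightarrow> a \<le> b \<and> continuous_on {a..b} g \<and> bdd_above (partition_sums g a b)"

definition arc_len :: "(real \<Rightarrow> 'a::metric_space) \<Rightarrow> real \<Rightarrow> real \<Rightarrow> real" where
  "arc_len g a b = Sup (partition_sums g a b)"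

definition length_fun :: "(real \<Rightarrow> 'a::metric_space) \<Rightarrow> real \<Rightarrow> real \<Rightarrow> real \<Rightarrow> real" where
  "length_fun g a b t = arc_len g a (max a (min b t))"

(* line integral  \<integral>_g \<rho> |dx| = \<integral>_a^b \<rho>(g t) ds_g(t)  (Lebesgue-Stieltjes w.r.t. arc length) *)
definition line_integral :: "('a::metric_space \<Rightarrow> ennreal) \<Rightarrow> (real \<Rightarrow> 'a) \<Rightarrow> real \<Rightarrow> real \<Rightarrow> ennreal" where
  "line_integral \<rho> g a b =
     (\<integral>\<^sup>+ t. \<rho> (g t) * indicator {a..b} t \<partial>(interval_measure (length_fun g a b)))"

definition path_family :: "'a::topological_space set \<Rightarrow> 'a set \<Rightarrow> 'a set \<Rightarrow> 'a path_t set" where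
  "path_family E F G =
     {(g, s, t). s < t \<and> continuous_on {s..t} g \<and> g s \<in> E \<and> g t \<in> F \<and>
                 (\<forall>\<tau>. s < \<tau> \<and> \<tau> < t \<longrightarrow> g \<tau> \<in> G)}"

(* power on [0,\<infinity>] for positive exponents *)
definition enn_powr :: "ennreal \<Rightarrow> real \<Rightarrow> ennreal" where
  "enn_powr x q = (if x = \<infinity> then \<infinity> else ennreal (enn2real x powr q))"

(* admissible densities: Borel \<rho> : R^n \<rightarrow> [0,\<infinity>] with \<integral>_\<gamma> \<rho> \<ge> 1 for each
   locally rectifiable \<gamma> (for closed parameter intervals: rectifiable) *)
definition admissible :: "'a path_t set \<Rightarrow> ('a::euclidean_space \<Rightarrow> ennreal) \<Rightarrow> bool" where
  "admissible \<Gamma> \<rho> \<longleftrightarrow> \<rho> \<in> borel_measurable borel \<and>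
     (\<forall>(g, s, t) \<in> \<Gamma>. rectifiable_on g s t \<longrightarrow> line_integral \<rho> g s t \<ge> 1)"

definition p_modulus :: "real \<Rightarrow> 'a::euclidean_space path_t set \<Rightarrow> ennreal" where
  "p_modulus p \<Gamma> = (INF \<rho> \<in> Collect (admissible \<Gamma>). \<integral>\<^sup>+ x. enn_powr (\<rho> x) p \<partial>lborel)"

end

theory Submission
  imports Defs
begin

text \<open>
  Fix \<open>a \<in> A\<close>, a polynomial path \<open>P\<close> from \<open>x\<^sub>0\<close> to \<open>a\<close> in \<open>D\<close> and a small ball \<open>W\<close> around
  \<open>x\<^sub>0\<close>. Given \<open>x \<in> C\<^sub>j\<close>, points \<open>u(s) \<in> C\<^sub>j\<close> with \<open>\<bar>u(s) - x\<bar> = s\<close> and \<open>v(\<sigma>) \<in> A\<close> with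
  \<open>\<bar>v(\<sigma>) - a\<bar> = \<sigma>\<close>, every \<open>(s, w, \<sigma>) \<in> [0, d] \<times> W \<times> [0, d]\<close> gives a path joining \<open>C\<^sub>j\<close> to
  \<open>A\<close> in \<open>D\<close>: the segment from \<open>u(s)\<close> to \<open>w\<close>, the translate \<open>w - x\<^sub>0 + P\<close>, and the segment from
  \<open>w + a - x\<^sub>0\<close> back to \<open>v(\<sigma>)\<close>. Averaging the admissibility inequality of a density \<open>\<rho>\<close> over
  these parameters, and bounding the averages along the segments by Young's inequality with
  weights \<open>\<Lambda> t\<^sup>\<alpha>\<close>, \<open>n - 2 < \<alpha> < p - 1\<close>, bounds \<open>|W|\<close> by a multiple of \<open>\<integral> \<rho>\<^sup>p\<close> plus \<open>|W| / 2\<close>.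
  The constants depend only on \<open>n\<close>, \<open>p\<close>, \<open>d\<close>, the lengths of the pieces and \<open>|W|\<close>, not on \<open>j\<close>.
  This is where \<open>p > n - 1\<close> is used.
\<close>

section \<open>Arc length and line integrals along Lipschitz paths\<close>

lemma partition_sums_lipschitz_bounds:
  fixes g :: "real \<Rightarrow> 'a::metric_space"
  assumes L: "K-lipschitz_on {a..b} g" and "x \<le> b" and "z \<in> partition_sums g a x"
  shows "0 \<le> z" "z \<le> K * (x - a)"
proof -
  obtain u k where z: "z = (\<Sum>i<k. dist (g (u i)) (g (u (Suc i))))"
    and u: "u 0 = a" "u k = x" and mono: "\<forall>i<k. u i \<le> u (Suc i)"
    using assms(3) unfolding partition_sums_def by auto
  have u_range: "a \<le> u i \<and> u i \<le> x" if "i \<le> k" for i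
  proof -
    have "u 0 \<le> u i" "u i \<le> u k"
      by (rule lift_Suc_mono_le_ivl[of "{..<k}"]; use mono that in auto)+
    then show ?thesis using u by simp
  qed
  show "0 \<le> z" unfolding z by (simp add: sum_nonneg)
  have "z \<le> (\<Sum>i<k. K * (u (Suc i) - u i))"
    unfolding z
  proof (rule sum_mono)
    fix i assume "i \<in> {..<k}"
    then have "u i \<in> {a..b}" "u (Suc i) \<in> {a..b}" "u i \<le> u (Suc i)"
      using u_range[of i] u_range[of "Suc i"] mono \<open>x \<le> b\<close> by auto
    then show "dist (g (u i)) (g (u (Suc i))) \<le> K * (u (Suc i) - u i)"
      using lipschitz_onD[OF L] by (fastforce simp: dist_real_def dist_commute)
  qed
  also have "\<dots> = K * (x - a)"
    by (simp add: sum_distrib_left[symmetric] sum_lessThan_telescope u)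
  finally show "z \<le> K * (x - a)" .
qed

lemma zero_in_partition_sums: "0 \<in> partition_sums g a a"
  unfolding partition_sums_def by (rule CollectI, rule exI[of _ "\<lambda>_. a"], rule exI[of _ 0]) simp

lemma partition_sums_snoc:
  assumes "z \<in> partition_sums g a x" and "x \<le> y"
  shows "z + dist (g x) (g y) \<in> partition_sums g a y"
proof -
  obtain u k where z: "z = (\<Sum>i<k. dist (g (u i)) (g (u (Suc i))))"
    and u: "u 0 = a" "u k = x" "\<forall>i<k. u i \<le> u (Suc i)"
    using assms(1) unfolding partition_sums_def by auto
  define u' where "u' = u(Suc k := y)"
  have "z + dist (g x) (g y) = (\<Sum>i<Suc k. dist (g (u' i)) (g (u' (Suc i))))"
    unfolding z u'_def using u by simp
  moreover have "u' 0 = a" "u' (Suc k) = y" "\<forall>i<Suc k. u' i \<le> u' (Suc i)"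
    using u \<open>x \<le> y\<close> by (auto simp: u'_def less_Suc_eq)
  ultimately show ?thesis
    unfolding partition_sums_def by blast
qed

lemma partition_sums_nonempty: "a \<le> x \<Longrightarrow> partition_sums g a x \<noteq> {}"
  using partition_sums_snoc[of 0 g a a x] zero_in_partition_sums[of g a] by auto

lemma bdd_above_partition_sums:
  "K-lipschitz_on {a..b} g \<Longrightarrow> x \<le> b \<Longrightarrow> bdd_above (partition_sums g a x)"
  by (rule bdd_aboveI, rule partition_sums_lipschitz_bounds(2))

lemma partition_sum_le_arc_len:
  "K-lipschitz_on {a..b} g \<Longrightarrow> x \<le> b \<Longrightarrow> z \<in> partition_sums g a x \<Longrightarrow> z \<le> arc_len g a x"
  unfolding arc_len_def by (rule cSup_upper, assumption, rule bdd_above_partition_sums)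

lemma arc_len_mono:
  assumes L: "K-lipschitz_on {a..b} g" and "a \<le> x" "x \<le> y" "y \<le> b"
  shows "arc_len g a x \<le> arc_len g a y"
  unfolding arc_len_def[of g a x]
proof (rule cSup_least[OF partition_sums_nonempty[OF \<open>a \<le> x\<close>]])
  fix z assume "z \<in> partition_sums g a x"
  then have "z + dist (g x) (g y) \<le> arc_len g a y"
    using partition_sum_le_arc_len[OF L \<open>y \<le> b\<close> partition_sums_snoc[OF _ \<open>x \<le> y\<close>]] by blast
  then show "z \<le> arc_len g a y" using zero_le_dist[of "g x" "g y"] by linarith
qed

text \<open>Induction over the number of partition points: the last subinterval either lies
  left of \<open>x\<close>, or it is split at \<open>x\<close> and its left part completes a partition of \<open>[a, x]\<close>.\<close>
lemma partition_sum_le_arc_len_add: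
  assumes L: "K-lipschitz_on {a..b} g"
    and u: "u 0 = a" "\<forall>i<k. u i \<le> u (Suc i)" "u k \<le> b" and x: "a \<le> x" "x \<le> u k"
  shows "(\<Sum>i<k. dist (g (u i)) (g (u (Suc i)))) \<le> arc_len g a x + K * (u k - x)"
  using u(2,3) x
proof (induction k arbitrary: x)
  case 0
  then show ?case using partition_sum_le_arc_len[OF L _ zero_in_partition_sums] u(1) by simp
next
  case (Suc k)
  have "u 0 \<le> u k"
    by (rule lift_Suc_mono_le_ivl[of "{..<Suc k}"]) (use Suc.prems(1) in auto)
  then have uk: "a \<le> u k" "u k \<le> u (Suc k)"
    using Suc.prems(1) u(1) by auto
  have lip: "dist (g s) (g t) \<le> K * (t - s)" if "a \<le> s" "s \<le> t" "t \<le> b" for s t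
    using lipschitz_onD[OF L, of s t] that by (simp add: dist_real_def dist_commute)
  show ?case
  proof (cases "x \<le> u k")
    case True
    then have "(\<Sum>i<k. dist (g (u i)) (g (u (Suc i)))) \<le> arc_len g a x + K * (u k - x)"
      using Suc uk by auto
    moreover have "dist (g (u k)) (g (u (Suc k))) \<le> K * (u (Suc k) - u k)"
      using lip uk Suc.prems(2) by simp
    ultimately show ?thesis by (simp add: algebra_simps)
  next
    case False
    have "(\<Sum>i<k. dist (g (u i)) (g (u (Suc i)))) \<in> partition_sums g a (u k)"
      unfolding partition_sums_def using u(1) Suc.prems(1) by (auto intro!: exI[of _ u] exI[of _ k])
    then have "(\<Sum>i<k. dist (g (u i)) (g (u (Suc i)))) + dist (g (u k)) (g x) \<in> partition_sums g a x"
      using False by (intro partition_sums_snoc) auto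
    then have "(\<Sum>i<k. dist (g (u i)) (g (u (Suc i)))) + dist (g (u k)) (g x) \<le> arc_len g a x"
      using Suc.prems by (intro partition_sum_le_arc_len[OF L]) auto
    moreover have "dist (g (u k)) (g (u (Suc k))) \<le> dist (g (u k)) (g x) + K * (u (Suc k) - x)"
      using dist_triangle[of "g (u k)" "g (u (Suc k))" "g x"] lip[of x "u (Suc k)"] Suc.prems by auto
    ultimately show ?thesis by simp
  qed
qed

lemma arc_len_add_le:
  assumes L: "K-lipschitz_on {a..b} g" and "a \<le> x" "x \<le> y" "y \<le> b"
  shows "arc_len g a y \<le> arc_len g a x + K * (y - x)"
  unfolding arc_len_def[of g a y]
proof (rule cSup_least)
  show "partition_sums g a y \<noteq> {}" by (rule partition_sums_nonempty) (use assms in linarith)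
  fix z assume "z \<in> partition_sums g a y"
  then show "z \<le> arc_len g a x + K * (y - x)"
    unfolding partition_sums_def using partition_sum_le_arc_len_add[OF L] assms by auto
qed

lemma rectifiable_on_lipschitz:
  "K-lipschitz_on {a..b} g \<Longrightarrow> a \<le> b \<Longrightarrow> rectifiable_on g a b"
  unfolding rectifiable_on_def
  by (metis lipschitz_on_continuous_on bdd_above_partition_sums order_refl)

lemma length_fun_lipschitz:
  assumes L: "K-lipschitz_on {a..b} g" and "a \<le> b" and "x \<le> y"
  shows "length_fun g a b x \<le> length_fun g a b y"
    "length_fun g a b y \<le> length_fun g a b x + K * (y - x)"
proof -
  define cl where "cl t = max a (min b t)" for t
  have cl: "a \<le> cl x" "cl x \<le> cl y" "cl y \<le> b" "cl y - cl x \<le> y - x"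
    using \<open>a \<le> b\<close> \<open>x \<le> y\<close> by (auto simp: cl_def)
  have F: "length_fun g a b t = arc_len g a (cl t)" for t
    unfolding length_fun_def cl_def ..
  show "length_fun g a b x \<le> length_fun g a b y"
    unfolding F using arc_len_mono[OF L cl(1-3)] .
  have "K * (cl y - cl x) \<le> K * (y - x)"
    using cl(4) lipschitz_on_nonneg[OF L] by (rule mult_left_mono)
  then show "length_fun g a b y \<le> length_fun g a b x + K * (y - x)"
    unfolding F using arc_len_add_le[OF L cl(1-3)] by linarith
qed

lemma interval_measure_eqI:
  fixes F :: "real \<Rightarrow> real"
  assumes "sets M = sets borel" and "mono F" and "\<And>a. continuous (at_right a) F"
    and M_Ioc: "\<And>a b. a \<le> b \<Longrightarrow> emeasure M {a<..b} = ennreal (F b - F a)"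
  shows "interval_measure F = M"
proof (rule measure_eqI_generator_eq[where E="range (\<lambda>(a, b). {a<..b})" and \<Omega>=UNIV
      and A="\<lambda>i. {- real i <.. real i}"])
  have "sets (borel :: real measure) = sigma_sets UNIV (range (\<lambda>(a, b). {a<..b}))"
    by (subst borel_sigma_sets_Ioc) (simp add: sets_measure_of)
  then show "sets (interval_measure F) = sigma_sets UNIV (range (\<lambda>(a, b). {a<..b}))"
    "sets M = sigma_sets UNIV (range (\<lambda>(a, b). {a<..b}))"
    using assms(1) by simp_all
  show "Int_stable (range (\<lambda>(a, b). {a<..b :: real}))"
  proof (rule Int_stableI, clarify)
    fix a b c d :: real
    have "{a<..b} \<inter> {c<..d} = {max a c<..min b d}" by auto
    then show "{a<..b} \<inter> {c<..d} \<in> range (\<lambda>(a, b). {a<..b})" by auto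
  qed
  show "(\<Union>i. {- real i<..real i}) = UNIV"
  proof (intro set_eqI iffI)
    fix x :: real
    obtain n :: nat where "\<bar>x\<bar> < real n" using reals_Archimedean2 by blast
    then show "x \<in> (\<Union>i. {- real i<..real i})" by (intro UN_I[of n]) auto
  qed simp
  show "emeasure (interval_measure F) {- real i<..real i} \<noteq> \<infinity>" for i
    using assms(2,3) by (simp add: emeasure_interval_measure_Ioc monoD)
  fix X assume "X \<in> range (\<lambda>(a, b). {a<..b :: real})"
  then obtain a b where X: "X = {a<..b}" by auto
  show "emeasure (interval_measure F) X = emeasure M X"
  proof (cases "a \<le> b")
    case True
    then show ?thesis using X assms(2,3) M_Ioc by (simp add: emeasure_interval_measure_Ioc monoD)
  qed (use X in simp)
qed (auto simp: image_subset_iff)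

lemma emeasure_interval_measure_le_add:
  fixes F G :: "real \<Rightarrow> real"
  assumes "mono F" "mono G" "\<And>a. continuous (at_right a) F" "\<And>a. continuous (at_right a) G"
    and "A \<in> sets borel"
  shows "emeasure (interval_measure F) A \<le> emeasure (interval_measure (\<lambda>x. F x + G x)) A"
proof -
  define \<mu> where "\<mu> A = emeasure (interval_measure F) A + emeasure (interval_measure G) A" for A
  define M where "M = measure_of UNIV (sets borel) \<mu>"
  have "countably_additive (sets borel) \<mu>"
  proof (rule countably_additiveI)
    fix B :: "nat \<Rightarrow> real set"
    assume "range B \<subseteq> sets borel" "disjoint_family B"
    then show "(\<Sum>i. \<mu> (B i)) = \<mu> (\<Union> (range B))"
      unfolding \<mu>_def by (simp add: suminf_add[symmetric] suminf_emeasure)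
  qed
  then have M: "emeasure M B = \<mu> B" if "B \<in> sets borel" for B
    unfolding M_def using that sets.sigma_algebra_axioms[of borel]
    by (intro emeasure_measure_of_sigma) (auto simp: positive_def \<mu>_def)
  have "interval_measure (\<lambda>x. F x + G x) = M"
  proof (rule interval_measure_eqI)
    show "sets M = sets borel"
      using sigma_algebra.sigma_sets_eq[OF sets.sigma_algebra_axioms[of borel]] by (simp add: M_def)
    show "mono (\<lambda>x. F x + G x)" using assms(1,2) by (simp add: mono_def add_mono)
    show "continuous (at_right a) (\<lambda>x. F x + G x)" for a using assms(3,4) by (intro continuous_add)
    fix a b :: real assume "a \<le> b"
    then show "emeasure M {a<..b} = ennreal (F b + G b - (F a + G a))"
      using assms(1-4) by (simp add: M \<mu>_def emeasure_interval_measure_Ioc monoD ennreal_plus[symmetric]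
          algebra_simps del: ennreal_plus)
  qed
  then show ?thesis using M[OF assms(5)] by (simp add: \<mu>_def)
qed

lemma interval_measure_scaled_lborel:
  fixes K :: real
  assumes "0 \<le> K"
  shows "interval_measure (\<lambda>x. K * x) = scale_measure K lborel"
proof (rule interval_measure_eqI)
  show "mono (\<lambda>x. K * x)" using assms by (simp add: mono_def mult_left_mono)
  show "continuous (at_right a) (\<lambda>x. K * x)" for a by (intro continuous_intros)
  fix a b :: real assume "a \<le> b"
  then show "emeasure (scale_measure K lborel) {a<..b} = ennreal (K * b - K * a)"
    using assms by (simp add: ennreal_mult[symmetric] right_diff_distrib)
qed simp

lemma line_integral_lipschitz_le:
  fixes g :: "real \<Rightarrow> 'a::euclidean_space" and \<rho> :: "'a \<Rightarrow> ennreal"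
  assumes L: "K-lipschitz_on {a..b} g" and "a \<le> b"
    and [measurable]: "\<rho> \<in> borel_measurable borel" "g \<in> borel_measurable borel"
  shows "line_integral \<rho> g a b \<le> ennreal K * (\<integral>\<^sup>+t. \<rho> (g t) * indicator {a..b} t \<partial>lborel)"
proof -
  define F where "F = length_fun g a b"
  have K: "0 \<le> K" using lipschitz_on_nonneg[OF L] .
  have F: "F x \<le> F y" "F y \<le> F x + K * (y - x)" if "x \<le> y" for x y
    unfolding F_def using length_fun_lipschitz[OF L \<open>a \<le> b\<close> that] by auto
  have "dist (F x) (F y) \<le> K * dist x y" for x y
  proof (cases "x \<le> y")
    case True
    then show ?thesis using F[OF True] by (simp add: dist_real_def)
  next
    case False
    then show ?thesis using F[of y x] by (simp add: dist_real_def)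
  qed
  then have "continuous_on UNIV F"
    using K by (intro lipschitz_on_continuous_on[of K] lipschitz_onI)
  then have "continuous (at_right x) F" for x
    by (simp add: continuous_on_eq_continuous_at continuous_at_imp_continuous_at_within)
  moreover have "continuous (at_right x) (\<lambda>t. K * t - F t)" for x
    using calculation by (intro continuous_intros)
  moreover have "mono F" "mono (\<lambda>t. K * t - F t)"
    using F by (auto intro!: monoI simp: algebra_simps)
  ultimately have "emeasure (interval_measure F) A \<le> emeasure (interval_measure (\<lambda>t. K * t)) A"
    if "A \<in> sets borel" for A
    using emeasure_interval_measure_le_add[of F "\<lambda>t. K * t - F t" A] that by simp
  then have "interval_measure F \<le> scale_measure K lborel"
    by (subst le_measure) (auto simp: interval_measure_scaled_lborel[OF K, symmetric])
  then have "line_integral \<rho> g a b \<le> (\<integral>\<^sup>+t. \<rho> (g t) * indicator {a..b} t \<partial>scale_measure K lborel)"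
    unfolding line_integral_def F_def by (intro nn_integral_mono_measure) simp_all
  then show ?thesis by (simp add: nn_integral_scale_measure)
qed

lemma admissible_lipschitz_path_bound:
  fixes \<rho> :: "'a::euclidean_space \<Rightarrow> ennreal" and g :: "real \<Rightarrow> 'a"
  assumes adm: "admissible (path_family E F G) \<rho>"
    and L: "K-lipschitz_on {a..b} g" and [measurable]: "g \<in> borel_measurable borel"
    and "a < b" "g a \<in> E" "g b \<in> F" "\<And>t. a < t \<Longrightarrow> t < b \<Longrightarrow> g t \<in> G"
  shows "1 \<le> ennreal K * (\<integral>\<^sup>+t. \<rho> (g t) * indicator {a..b} t \<partial>lborel)"
proof -
  have "(g, a, b) \<in> path_family E F G"
    unfolding path_family_def using assms lipschitz_on_continuous_on[OF L] by auto
  moreover have "rectifiable_on g a b"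
    using rectifiable_on_lipschitz[OF L] \<open>a < b\<close> by simp
  ultimately have "1 \<le> line_integral \<rho> g a b"
    using adm unfolding admissible_def by auto
  also have "\<dots> \<le> ennreal K * (\<integral>\<^sup>+t. \<rho> (g t) * indicator {a..b} t \<partial>lborel)"
    using adm \<open>a < b\<close> unfolding admissible_def by (intro line_integral_lipschitz_le[OF L]) auto
  finally show ?thesis .
qed

section \<open>Joining paths made of three pieces\<close>

lemma lipschitz_on_shift_unit_interval:
  fixes p :: "real \<Rightarrow> 'a::metric_space"
  assumes "K-lipschitz_on {0..1} p"
  shows "K-lipschitz_on {c..c + 1} (\<lambda>t. p (t - c))"
proof (rule lipschitz_onI)
  fix x y assume "x \<in> {c..c + 1}" "y \<in> {c..c + 1}"
  then have "x - c \<in> {0..1}" "y - c \<in> {0..1}" by auto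
  from lipschitz_onD[OF assms this] show "dist (p (x - c)) (p (y - c)) \<le> K * dist x y"
    by (simp add: dist_real_def)
qed (rule lipschitz_on_nonneg[OF assms])

lemma lipschitz_on_reflect_unit_interval:
  fixes p :: "real \<Rightarrow> 'a::metric_space"
  assumes "K-lipschitz_on {0..1} p"
  shows "K-lipschitz_on {c - 1..c} (\<lambda>t. p (c - t))"
proof (rule lipschitz_onI)
  fix x y assume "x \<in> {c - 1..c}" "y \<in> {c - 1..c}"
  then have "c - x \<in> {0..1}" "c - y \<in> {0..1}" by auto
  from lipschitz_onD[OF assms this] show "dist (p (c - x)) (p (c - y)) \<le> K * dist x y"
    by (simp add: dist_real_def abs_minus_commute)
qed (rule lipschitz_on_nonneg[OF assms])

lemma nn_integral_shift_unit_interval: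
  fixes f :: "real \<Rightarrow> ennreal"
  assumes [measurable]: "f \<in> borel_measurable borel"
  shows "(\<integral>\<^sup>+x. f (x - c) * indicator {c..c + 1} x \<partial>lborel) = (\<integral>\<^sup>+t. f t * indicator {0..1} t \<partial>lborel)"
  using nn_integral_real_affine[of "\<lambda>x. f (x - c) * indicator {c..c + 1} x" 1 c]
  by (simp add: indicator_def add.commute)

lemma nn_integral_reflect_unit_interval:
  fixes f :: "real \<Rightarrow> ennreal"
  assumes [measurable]: "f \<in> borel_measurable borel"
  shows "(\<integral>\<^sup>+x. f (c - x) * indicator {c - 1..c} x \<partial>lborel) = (\<integral>\<^sup>+t. f t * indicator {0..1} t \<partial>lborel)"
  using nn_integral_real_affine[of "\<lambda>x. f (c - x) * indicator {c - 1..c} x" "-1" c]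
  by (simp add: indicator_def conj_commute)

text \<open>The third piece is traversed backwards, so that each piece starts at the point over which
  the estimates below average.\<close>
lemma admissible_three_piece_bound:
  fixes \<rho> :: "'a::euclidean_space \<Rightarrow> ennreal" and p1 p2 p3 :: "real \<Rightarrow> 'a"
  assumes adm: "admissible (path_family E F G) \<rho>"
    and [measurable]: "p1 \<in> borel_measurable borel" "p2 \<in> borel_measurable borel" "p3 \<in> borel_measurable borel"
    and L: "K-lipschitz_on {0..1} p1" "K-lipschitz_on {0..1} p2" "K-lipschitz_on {0..1} p3"
    and joins: "p1 1 = p2 0" "p2 1 = p3 1" and ends: "p1 0 \<in> E" "p3 0 \<in> F"
    and inner: "\<And>t. 0 < t \<Longrightarrow> t \<le> 1 \<Longrightarrow> p1 t \<in> G" "\<And>t. 0 \<le> t \<Longrightarrow> t \<le> 1 \<Longrightarrow> p2 t \<in> G"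
      "\<And>t. 0 < t \<Longrightarrow> t \<le> 1 \<Longrightarrow> p3 t \<in> G"
  shows "1 \<le> ennreal K * ((\<integral>\<^sup>+t. \<rho> (p1 t) * indicator {0..1} t \<partial>lborel)
      + (\<integral>\<^sup>+t. \<rho> (p2 t) * indicator {0..1} t \<partial>lborel) + (\<integral>\<^sup>+t. \<rho> (p3 t) * indicator {0..1} t \<partial>lborel))"
proof -
  have [measurable]: "\<rho> \<in> borel_measurable borel" using adm by (simp add: admissible_def)
  define g where "g t = (if t \<le> 1 then p1 t else if t \<le> 2 then p2 (t - 1) else p3 (3 - t))" for t
  have [measurable]: "g \<in> borel_measurable borel" unfolding g_def by measurable
  have "K-lipschitz_on {1..2} (\<lambda>t. p2 (t - 1))" "K-lipschitz_on {2..3} (\<lambda>t. p3 (3 - t))"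
    using lipschitz_on_shift_unit_interval[OF L(2), of 1] lipschitz_on_reflect_unit_interval[OF L(3), of 3]
    by simp_all
  from lipschitz_on_concat[OF this] have "K-lipschitz_on {1..3} (\<lambda>t. if t \<le> 2 then p2 (t - 1) else p3 (3 - t))"
    using joins by simp
  from lipschitz_on_concat[OF L(1) this] have "K-lipschitz_on {0..3} g"
    using joins unfolding g_def by simp
  then have "1 \<le> ennreal K * (\<integral>\<^sup>+t. \<rho> (g t) * indicator {0..3} t \<partial>lborel)"
    by (rule admissible_lipschitz_path_bound[OF adm]) (use ends inner in \<open>auto simp: g_def\<close>)
  also have "(\<integral>\<^sup>+t. \<rho> (g t) * indicator {0..3} t \<partial>lborel)
      \<le> (\<integral>\<^sup>+x. \<rho> (p1 x) * indicator {0..1} x + \<rho> (p2 (x - 1)) * indicator {1..2} x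
            + \<rho> (p3 (3 - x)) * indicator {2..3} x \<partial>lborel)"
    by (intro nn_integral_mono) (auto simp: g_def indicator_def)
  also have "\<dots> = (\<integral>\<^sup>+t. \<rho> (p1 t) * indicator {0..1} t \<partial>lborel)
      + (\<integral>\<^sup>+t. \<rho> (p2 t) * indicator {0..1} t \<partial>lborel) + (\<integral>\<^sup>+t. \<rho> (p3 t) * indicator {0..1} t \<partial>lborel)"
  proof -
    have m: "(\<lambda>x. \<rho> (p1 x) * indicator {0..1} x) \<in> borel_measurable lborel"
      "(\<lambda>x. \<rho> (p2 (x - 1)) * indicator {1..2} x) \<in> borel_measurable lborel"
      "(\<lambda>x. \<rho> (p3 (3 - x)) * indicator {2..3} x) \<in> borel_measurable lborel"
      by measurable
    have "(\<lambda>t. \<rho> (p2 t)) \<in> borel_measurable borel" "(\<lambda>t. \<rho> (p3 t)) \<in> borel_measurable borel"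
      by measurable
    from nn_integral_shift_unit_interval[OF this(1), of 1] nn_integral_reflect_unit_interval[OF this(2), of 3]
    show ?thesis
      by (simp add: nn_integral_add[OF borel_measurable_add[OF m(1,2)] m(3)] nn_integral_add[OF m(1,2)])
  qed
  finally show ?thesis by (simp add: mult_left_mono)
qed

lemma lipschitz_on_segment:
  fixes u w :: "'a::real_normed_vector"
  shows "(norm (w - u))-lipschitz_on S (\<lambda>t. u + t *\<^sub>R (w - u))"
proof (rule lipschitz_onI)
  fix x y :: real
  have "dist (u + x *\<^sub>R (w - u)) (u + y *\<^sub>R (w - u)) = norm ((x - y) *\<^sub>R (w - u))"
    by (simp add: dist_norm algebra_simps)
  then show "dist (u + x *\<^sub>R (w - u)) (u + y *\<^sub>R (w - u)) \<le> norm (w - u) * dist x y"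
    by (simp add: dist_real_def mult.commute)
qed simp

lemma admissible_segment_translate_segment_bound:
  fixes \<rho> :: "'a::euclidean_space \<Rightarrow> ennreal" and Q :: "real \<Rightarrow> 'a"
  assumes adm: "admissible (path_family E F G) \<rho>"
    and [measurable]: "Q \<in> borel_measurable borel"
    and Q: "L-lipschitz_on {0..1} Q" "L \<le> K" "Q 0 = 0"
    and ends: "u \<in> E" "v \<in> F" and lengths: "norm (w - u) \<le> K" "norm (w + Q 1 - v) \<le> K"
    and inner: "\<And>t. t \<in> {0<..1} \<Longrightarrow> u + t *\<^sub>R (w - u) \<in> G" "\<And>t. t \<in> {0..1} \<Longrightarrow> w + Q t \<in> G"
      "\<And>t. t \<in> {0<..1} \<Longrightarrow> v + t *\<^sub>R (w + Q 1 - v) \<in> G"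
  shows "1 \<le> ennreal K * ((\<integral>\<^sup>+t. \<rho> (u + t *\<^sub>R (w - u)) * indicator {0..1} t \<partial>lborel)
      + (\<integral>\<^sup>+t. \<rho> (w + Q t) * indicator {0..1} t \<partial>lborel)
      + (\<integral>\<^sup>+t. \<rho> (v + t *\<^sub>R (w + Q 1 - v)) * indicator {0..1} t \<partial>lborel))"
proof (rule admissible_three_piece_bound[OF adm])
  show "K-lipschitz_on {0..1} (\<lambda>t. u + t *\<^sub>R (w - u))"
    "K-lipschitz_on {0..1} (\<lambda>t. v + t *\<^sub>R (w + Q 1 - v))"
    using lipschitz_on_mono[OF lipschitz_on_segment order_refl] lengths by blast+
  show "K-lipschitz_on {0..1} (\<lambda>t. w + Q t)"
    using lipschitz_on_mono[OF Q(1) order_refl Q(2)] by (simp add: lipschitz_on_def dist_norm)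
qed (use ends inner Q(3) in \<open>auto simp: algebra_simps\<close>)

section \<open>Averages of a density over families of segments and translates\<close>

lemma enn_powr_measurable [measurable]:
  assumes [measurable]: "f \<in> borel_measurable M"
  shows "(\<lambda>x. enn_powr (f x) q) \<in> borel_measurable M"
  unfolding enn_powr_def by measurable

lemma young_powr_bound:
  fixes p \<kappa> x :: real
  assumes p: "p > 1" and \<kappa>: "\<kappa> > 0" and x: "x \<ge> 0"
  shows "x \<le> \<kappa> * x powr p + \<kappa> powr (- 1 / (p - 1))"
proof (cases "\<kappa> * x powr (p - 1) \<ge> 1")
  case True
  have "x \<le> x * (\<kappa> * x powr (p - 1))" using True x by (simp add: mult_le_cancel_left1)
  also have "\<dots> = \<kappa> * x powr p"
    using x p by (cases "x = 0") (simp_all add: powr_mult_base algebra_simps)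
  finally show ?thesis using \<kappa> by (simp add: add_increasing2)
next
  case False
  then have "x powr (p - 1) < 1 / \<kappa>" using \<kappa> by (simp add: field_simps mult.commute)
  then have "(x powr (p - 1)) powr (1 / (p - 1)) < (1 / \<kappa>) powr (1 / (p - 1))"
    using p x by (intro powr_less_mono2) auto
  then have "x < \<kappa> powr (- 1 / (p - 1))"
    using p x \<kappa> by (simp add: powr_powr powr_divide powr_minus_divide)
  then show ?thesis using \<kappa> x by (smt (verit) powr_ge_zero zero_le_mult_iff)
qed

lemma young_enn_powr_bound:
  fixes p \<kappa> :: real and x :: ennreal
  assumes p: "p > 1" and \<kappa>: "\<kappa> > 0"
  shows "x \<le> ennreal \<kappa> * enn_powr x p + ennreal (\<kappa> powr (- 1 / (p - 1)))"
proof (cases x)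
  case (real y)
  then have "ennreal y \<le> ennreal (\<kappa> * y powr p + \<kappa> powr (- 1 / (p - 1)))"
    using young_powr_bound[OF p \<kappa>] by (intro ennreal_leI) simp
  then show ?thesis
    using real \<kappa> by (simp add: enn_powr_def ennreal_plus ennreal_mult)
qed (use \<kappa> in \<open>simp add: enn_powr_def ennreal_mult_top\<close>)

lemma nn_integral_lborel_affine:
  fixes f :: "'a::euclidean_space \<Rightarrow> ennreal"
  assumes [measurable]: "f \<in> borel_measurable borel" and "t > 0"
  shows "(\<integral>\<^sup>+w. f (b + t *\<^sub>R w) \<partial>lborel) = ennreal (t powr (- real DIM('a))) * (\<integral>\<^sup>+z. f z \<partial>lborel)"
proof -
  have "(\<integral>\<^sup>+z. f z \<partial>lborel) = ennreal (t ^ DIM('a)) * (\<integral>\<^sup>+w. f (b + t *\<^sub>R w) \<partial>lborel)"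
    using \<open>t > 0\<close> by (subst lborel_affine[of t b])
      (auto simp: nn_integral_density nn_integral_distr nn_integral_cmult)
  moreover have "ennreal (t powr (- real DIM('a))) * ennreal (t ^ DIM('a)) = 1"
    using \<open>t > 0\<close> by (simp add: ennreal_mult'[symmetric] powr_minus powr_realpow field_simps)
  ultimately show ?thesis
    by (metis mult.assoc mult_1)
qed

lemma nn_integral_unit_interval_open:
  fixes f :: "real \<Rightarrow> ennreal"
  shows "(\<integral>\<^sup>+t. f t * indicator {0..1} t \<partial>lborel) = (\<integral>\<^sup>+t. f t * indicator {0<..1} t \<partial>lborel)"
proof (rule nn_integral_cong_AE)
  show "AE t in lborel. f t * indicator {0..1} t = f t * indicator {0<..1} t"
    using AE_lborel_singleton[of 0] by eventually_elim (auto simp: indicator_def)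
qed

lemma nn_integral_powr_unit_interval:
  fixes \<gamma> :: real
  assumes "\<gamma> > -1"
  shows "(\<integral>\<^sup>+t. ennreal (t powr \<gamma>) * indicator {0<..1} t \<partial>lborel) = ennreal (1 / (\<gamma> + 1))"
proof -
  have "((\<lambda>x. x powr \<gamma>) has_integral (1 / (\<gamma> + 1))) {0..1}"
    using has_integral_powr_from_0[OF assms, of 1] by simp
  from nn_integral_has_integral_lebesgue'[OF _ this]
  have "(\<integral>\<^sup>+t. ennreal (t powr \<gamma>) * indicator {0..1} t \<partial>lborel) = ennreal (1 / (\<gamma> + 1))"
    by simp
  then show ?thesis by (simp add: nn_integral_unit_interval_open)
qed

lemma nn_integral_swap_indicator:
  fixes f :: "'a::euclidean_space \<Rightarrow> real \<Rightarrow> ennreal"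
  assumes [measurable]: "case_prod f \<in> borel_measurable (lborel \<Otimes>\<^sub>M lborel)"
    "W \<in> sets borel" "T \<in> sets borel"
  shows "(\<integral>\<^sup>+w. (\<integral>\<^sup>+t. f w t * indicator T t \<partial>lborel) * indicator W w \<partial>lborel)
    = (\<integral>\<^sup>+t. (\<integral>\<^sup>+w. f w t * indicator W w \<partial>lborel) * indicator T t \<partial>lborel)"
proof -
  have "(\<integral>\<^sup>+t. f w t * indicator T t \<partial>lborel) * indicator W w
      = (\<integral>\<^sup>+t. f w t * indicator W w * indicator T t \<partial>lborel)" for w
    by (subst nn_integral_multc[symmetric]) (measurable, simp add: mult_ac)
  moreover have "(\<integral>\<^sup>+w. f w t * indicator W w \<partial>lborel) * indicator T t
      = (\<integral>\<^sup>+w. f w t * indicator W w * indicator T t \<partial>lborel)" for t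
    by (rule nn_integral_multc[symmetric]) measurable
  ultimately show ?thesis
    by (simp add: lborel_pair.Fubini'[of "\<lambda>w t. f w t * indicator W w * indicator T t"])
qed

definition segment_majorant ::
    "real \<Rightarrow> real \<Rightarrow> ('a::euclidean_space \<Rightarrow> ennreal) \<Rightarrow> ('a \<Rightarrow> real) \<Rightarrow> real \<Rightarrow> real \<Rightarrow> ennreal"
  where "segment_majorant p \<alpha> \<rho> \<phi> R s =
    (\<integral>\<^sup>+t. ennreal (t powr (\<alpha> - real DIM('a))) * indicator {0<..1} t *
        (\<integral>\<^sup>+z. enn_powr (\<rho> z) p * indicator {z. \<bar>\<phi> z - s\<bar> \<le> t * R} z \<partial>lborel) \<partial>lborel)"

lemma segment_majorant_measurable [measurable]:
  assumes [measurable]: "\<rho> \<in> borel_measurable borel" "\<phi> \<in> borel_measurable borel"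
  shows "segment_majorant p \<alpha> \<rho> \<phi> R \<in> borel_measurable borel"
  unfolding segment_majorant_def by measurable

lemma segment_slice_bound:
  fixes \<rho> :: "'a::euclidean_space \<Rightarrow> ennreal" and \<phi> :: "'a \<Rightarrow> real"
  assumes [measurable]: "\<rho> \<in> borel_measurable borel" "\<phi> \<in> borel_measurable borel" "W \<in> sets borel"
    and \<phi>: "1-lipschitz_on UNIV \<phi>" and R: "\<And>w. w \<in> W \<Longrightarrow> norm (w + c - u) \<le> R"
    and p: "p > 1" and \<kappa>: "\<kappa> > 0" and t: "t > 0"
  shows "(\<integral>\<^sup>+w. \<rho> (u + t *\<^sub>R (w + c - u)) * indicator W w \<partial>lborel)
    \<le> ennreal (\<kappa> * t powr (- real DIM('a))) *
        (\<integral>\<^sup>+z. enn_powr (\<rho> z) p * indicator {z. \<bar>\<phi> z - \<phi> u\<bar> \<le> t * R} z \<partial>lborel)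
      + ennreal (\<kappa> powr (- 1 / (p - 1))) * emeasure lborel W"
proof -
  define b where "b = u + t *\<^sub>R (c - u)"
  have b: "u + t *\<^sub>R (w + c - u) = b + t *\<^sub>R w" for w
    unfolding b_def by (simp add: algebra_simps)
  define f where "f z = enn_powr (\<rho> z) p * indicator {z. \<bar>\<phi> z - \<phi> u\<bar> \<le> t * R} z" for z
  have slab: "enn_powr (\<rho> (b + t *\<^sub>R w)) p \<le> f (b + t *\<^sub>R w)" if "w \<in> W" for w
  proof -
    have "\<bar>\<phi> (b + t *\<^sub>R w) - \<phi> u\<bar> \<le> norm (t *\<^sub>R (w + c - u))"
      using lipschitz_onD[OF \<phi>, of "b + t *\<^sub>R w" u] by (simp add: b[symmetric] dist_norm dist_real_def)
    also have "\<dots> \<le> t * R" using R[OF that] t by (simp add: mult_left_mono)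
    finally show ?thesis by (simp add: f_def)
  qed
  have "(\<integral>\<^sup>+w. \<rho> (u + t *\<^sub>R (w + c - u)) * indicator W w \<partial>lborel)
      \<le> (\<integral>\<^sup>+w. ennreal \<kappa> * f (b + t *\<^sub>R w) + ennreal (\<kappa> powr (- 1 / (p - 1))) * indicator W w \<partial>lborel)"
  proof (rule nn_integral_mono)
    fix w
    show "\<rho> (u + t *\<^sub>R (w + c - u)) * indicator W w
      \<le> ennreal \<kappa> * f (b + t *\<^sub>R w) + ennreal (\<kappa> powr (- 1 / (p - 1))) * indicator W w"
    proof (cases "w \<in> W")
      case True
      have "\<rho> (b + t *\<^sub>R w) \<le> ennreal \<kappa> * enn_powr (\<rho> (b + t *\<^sub>R w)) p + ennreal (\<kappa> powr (- 1 / (p - 1)))"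
        by (rule young_enn_powr_bound[OF p \<kappa>])
      also have "\<dots> \<le> ennreal \<kappa> * f (b + t *\<^sub>R w) + ennreal (\<kappa> powr (- 1 / (p - 1)))"
        using slab[OF True] by (intro add_right_mono mult_left_mono) auto
      finally show ?thesis using True by (simp add: b)
    qed simp
  qed
  also have "\<dots> = ennreal \<kappa> * (\<integral>\<^sup>+w. f (b + t *\<^sub>R w) \<partial>lborel)
      + ennreal (\<kappa> powr (- 1 / (p - 1))) * emeasure lborel W"
    unfolding f_def by (subst nn_integral_add) (auto simp: nn_integral_cmult)
  also have "(\<integral>\<^sup>+w. f (b + t *\<^sub>R w) \<partial>lborel) = ennreal (t powr (- real DIM('a))) * (\<integral>\<^sup>+z. f z \<partial>lborel)"
    unfolding f_def by (rule nn_integral_lborel_affine[OF _ t]) measurable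
  finally show ?thesis
    using \<kappa> t by (simp add: f_def ennreal_mult mult.assoc)
qed

text \<open>Young's inequality is applied with the weight \<open>\<Lambda> t\<^sup>\<alpha>\<close>: the condition \<open>\<alpha> < p - 1\<close> makes
  the resulting \<open>t\<close>-integral of the measure term finite.\<close>
lemma segment_family_bound:
  fixes \<rho> :: "'a::euclidean_space \<Rightarrow> ennreal" and \<phi> :: "'a \<Rightarrow> real"
  assumes [measurable]: "\<rho> \<in> borel_measurable borel" "\<phi> \<in> borel_measurable borel" "W \<in> sets borel"
    and \<phi>: "1-lipschitz_on UNIV \<phi>" and R: "\<And>w. w \<in> W \<Longrightarrow> norm (w + c - u) \<le> R"
    and p: "p > 1" and \<Lambda>: "\<Lambda> > 0" and \<alpha>: "\<alpha> < p - 1"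
  shows "(\<integral>\<^sup>+w. (\<integral>\<^sup>+t. \<rho> (u + t *\<^sub>R (w + c - u)) * indicator {0..1} t \<partial>lborel) * indicator W w \<partial>lborel)
    \<le> ennreal \<Lambda> * segment_majorant p \<alpha> \<rho> \<phi> R (\<phi> u)
      + ennreal (\<Lambda> powr (- 1 / (p - 1)) / (1 - \<alpha> / (p - 1))) * emeasure lborel W"
proof -
  let ?S = "\<lambda>t. \<integral>\<^sup>+z. enn_powr (\<rho> z) p * indicator {z. \<bar>\<phi> z - \<phi> u\<bar> \<le> t * R} z \<partial>lborel"
  have "(\<integral>\<^sup>+w. (\<integral>\<^sup>+t. \<rho> (u + t *\<^sub>R (w + c - u)) * indicator {0..1} t \<partial>lborel) * indicator W w \<partial>lborel)
      = (\<integral>\<^sup>+t. (\<integral>\<^sup>+w. \<rho> (u + t *\<^sub>R (w + c - u)) * indicator W w \<partial>lborel) * indicator {0<..1} t \<partial>lborel)"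
    unfolding nn_integral_unit_interval_open by (rule nn_integral_swap_indicator) measurable
  also have "\<dots> \<le> (\<integral>\<^sup>+t. ennreal \<Lambda> * (ennreal (t powr (\<alpha> - real DIM('a))) * indicator {0<..1} t * ?S t)
      + ennreal (\<Lambda> powr (- 1 / (p - 1))) * emeasure lborel W * (ennreal (t powr (- \<alpha> / (p - 1))) * indicator {0<..1} t) \<partial>lborel)"
  proof (rule nn_integral_mono)
    fix t :: real
    show "(\<integral>\<^sup>+w. \<rho> (u + t *\<^sub>R (w + c - u)) * indicator W w \<partial>lborel) * indicator {0<..1} t
      \<le> ennreal \<Lambda> * (ennreal (t powr (\<alpha> - real DIM('a))) * indicator {0<..1} t * ?S t)
        + ennreal (\<Lambda> powr (- 1 / (p - 1))) * emeasure lborel W * (ennreal (t powr (- \<alpha> / (p - 1))) * indicator {0<..1} t)"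
    proof (cases "t \<in> {0<..1}")
      case True
      then have t: "t > 0" by simp
      have "ennreal (\<Lambda> * t powr \<alpha> * t powr (- real DIM('a))) = ennreal \<Lambda> * ennreal (t powr (\<alpha> - real DIM('a)))"
        using \<Lambda> by (simp add: mult.assoc powr_add[symmetric] ennreal_mult)
      moreover have "ennreal ((\<Lambda> * t powr \<alpha>) powr (- 1 / (p - 1)))
          = ennreal (\<Lambda> powr (- 1 / (p - 1))) * ennreal (t powr (- \<alpha> / (p - 1)))"
        using t \<Lambda> by (simp add: powr_mult powr_powr ennreal_mult)
      ultimately show ?thesis
        using True segment_slice_bound[OF assms(1-5) p _ t, of "\<Lambda> * t powr \<alpha>"] \<Lambda>
        by (simp add: mult_ac)
    qed simp
  qed
  also have "\<dots> = ennreal \<Lambda> * segment_majorant p \<alpha> \<rho> \<phi> R (\<phi> u)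
      + ennreal (\<Lambda> powr (- 1 / (p - 1))) * emeasure lborel W * ennreal (1 / (- \<alpha> / (p - 1) + 1))"
    unfolding segment_majorant_def
    by (subst nn_integral_add, simp_all add: nn_integral_cmult nn_integral_powr_unit_interval p \<alpha>)
  also have "ennreal (\<Lambda> powr (- 1 / (p - 1))) * emeasure lborel W * ennreal (1 / (- \<alpha> / (p - 1) + 1))
      = ennreal (\<Lambda> powr (- 1 / (p - 1)) / (1 - \<alpha> / (p - 1))) * emeasure lborel W"
    using \<alpha> p by (simp add: ennreal_mult'[symmetric] mult.commute[of _ "emeasure lborel W"] mult.assoc)
  finally show ?thesis .
qed

lemma nn_integral_slab:
  fixes \<rho> :: "'a::euclidean_space \<Rightarrow> ennreal" and \<phi> :: "'a \<Rightarrow> real"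
  assumes [measurable]: "\<rho> \<in> borel_measurable borel" "\<phi> \<in> borel_measurable borel" and "a \<ge> 0"
  shows "(\<integral>\<^sup>+s. (\<integral>\<^sup>+z. enn_powr (\<rho> z) p * indicator {z. \<bar>\<phi> z - s\<bar> \<le> a} z \<partial>lborel) \<partial>lborel)
    = ennreal (2 * a) * (\<integral>\<^sup>+z. enn_powr (\<rho> z) p \<partial>lborel)"
proof -
  have slab: "indicator {z. \<bar>\<phi> z - s\<bar> \<le> a} z = (indicator {\<phi> z - a .. \<phi> z + a} s :: ennreal)" for z s
    by (auto simp: indicator_def abs_le_iff)
  have "(\<integral>\<^sup>+s. (\<integral>\<^sup>+z. enn_powr (\<rho> z) p * indicator {z. \<bar>\<phi> z - s\<bar> \<le> a} z \<partial>lborel) \<partial>lborel)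
     = (\<integral>\<^sup>+z. (\<integral>\<^sup>+s. enn_powr (\<rho> z) p * indicator {z. \<bar>\<phi> z - s\<bar> \<le> a} z \<partial>lborel) \<partial>lborel)"
    by (rule lborel_pair.Fubini') measurable
  also have "\<dots> = (\<integral>\<^sup>+z. (\<integral>\<^sup>+s. enn_powr (\<rho> z) p * indicator {\<phi> z - a .. \<phi> z + a} s \<partial>lborel) \<partial>lborel)"
    unfolding slab ..
  also have "\<dots> = (\<integral>\<^sup>+z. ennreal (2 * a) * enn_powr (\<rho> z) p \<partial>lborel)"
    using \<open>a \<ge> 0\<close> by (simp add: nn_integral_cmult_indicator mult.commute)
  finally show ?thesis by (simp add: nn_integral_cmult)
qed

text \<open>Integrating the slab energies over \<open>s\<close> recovers the total energy with a factor \<open>2 t R\<close>;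
  the condition \<open>\<alpha> > n - 2\<close> makes the remaining \<open>t\<close>-integral finite.\<close>
lemma segment_majorant_integral:
  fixes \<rho> :: "'a::euclidean_space \<Rightarrow> ennreal" and \<phi> :: "'a \<Rightarrow> real"
  assumes [measurable]: "\<rho> \<in> borel_measurable borel" "\<phi> \<in> borel_measurable borel"
    and R: "R \<ge> 0" and \<alpha>: "\<alpha> > real DIM('a) - 2"
  shows "(\<integral>\<^sup>+s. segment_majorant p \<alpha> \<rho> \<phi> R s \<partial>lborel)
    = ennreal (2 * R / (\<alpha> - real DIM('a) + 2)) * (\<integral>\<^sup>+z. enn_powr (\<rho> z) p \<partial>lborel)"
proof -
  let ?N = "\<integral>\<^sup>+z. enn_powr (\<rho> z) p \<partial>lborel"
  have "(\<integral>\<^sup>+s. segment_majorant p \<alpha> \<rho> \<phi> R s \<partial>lborel)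
      = (\<integral>\<^sup>+t. ennreal (t powr (\<alpha> - real DIM('a))) * indicator {0<..1} t *
          (\<integral>\<^sup>+s. (\<integral>\<^sup>+z. enn_powr (\<rho> z) p * indicator {z. \<bar>\<phi> z - s\<bar> \<le> t * R} z \<partial>lborel) \<partial>lborel) \<partial>lborel)"
    unfolding segment_majorant_def
    by (subst lborel_pair.Fubini') (measurable, simp add: nn_integral_cmult)
  also have "\<dots> = (\<integral>\<^sup>+t. ennreal (2 * R) * ?N * (ennreal (t powr (\<alpha> - real DIM('a) + 1)) * indicator {0<..1} t) \<partial>lborel)"
  proof (rule nn_integral_cong)
    fix t :: real
    show "ennreal (t powr (\<alpha> - real DIM('a))) * indicator {0<..1} t *
          (\<integral>\<^sup>+s. (\<integral>\<^sup>+z. enn_powr (\<rho> z) p * indicator {z. \<bar>\<phi> z - s\<bar> \<le> t * R} z \<partial>lborel) \<partial>lborel)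
      = ennreal (2 * R) * ?N * (ennreal (t powr (\<alpha> - real DIM('a) + 1)) * indicator {0<..1} t)"
    proof (cases "t \<in> {0<..1}")
      case True
      then have "t powr (\<alpha> - real DIM('a)) * (2 * (t * R)) = 2 * R * t powr (\<alpha> - real DIM('a) + 1)"
        by (simp add: powr_add)
      then have "ennreal (t powr (\<alpha> - real DIM('a))) * ennreal (2 * (t * R))
          = ennreal (2 * R) * ennreal (t powr (\<alpha> - real DIM('a) + 1))"
        using True R by (simp add: ennreal_mult[symmetric])
      moreover have "(\<integral>\<^sup>+s. (\<integral>\<^sup>+z. enn_powr (\<rho> z) p * indicator {z. \<bar>\<phi> z - s\<bar> \<le> t * R} z \<partial>lborel) \<partial>lborel)
          = ennreal (2 * (t * R)) * ?N"
        using True R by (intro nn_integral_slab) auto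
      ultimately show ?thesis
        using True by (simp add: mult_ac)
    qed simp
  qed
  also have "\<dots> = ennreal (2 * R) * ?N * ennreal (1 / (\<alpha> - real DIM('a) + 1 + 1))"
    using \<alpha> by (simp add: nn_integral_cmult nn_integral_powr_unit_interval)
  also have "\<dots> = ennreal (2 * R / (\<alpha> - real DIM('a) + 2)) * ?N"
  proof -
    have "ennreal (2 * R / (\<alpha> - real DIM('a) + 2)) = ennreal (2 * R) * ennreal (1 / (\<alpha> - real DIM('a) + 1 + 1))"
      using \<alpha> R by (simp add: ennreal_mult[symmetric] add.assoc)
    then show ?thesis by (simp add: mult_ac)
  qed
  finally show ?thesis .
qed

lemma translate_family_bound:
  fixes \<rho> :: "'a::euclidean_space \<Rightarrow> ennreal" and Q :: "real \<Rightarrow> 'a"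
  assumes [measurable]: "\<rho> \<in> borel_measurable borel" "Q \<in> borel_measurable borel" "W \<in> sets borel"
    and p: "p > 1" and \<Lambda>: "\<Lambda> > 0"
  shows "(\<integral>\<^sup>+w. (\<integral>\<^sup>+t. \<rho> (w + Q t) * indicator {0..1} t \<partial>lborel) * indicator W w \<partial>lborel)
    \<le> ennreal \<Lambda> * (\<integral>\<^sup>+z. enn_powr (\<rho> z) p \<partial>lborel) + ennreal (\<Lambda> powr (- 1 / (p - 1))) * emeasure lborel W"
proof -
  let ?N = "\<integral>\<^sup>+z. enn_powr (\<rho> z) p \<partial>lborel"
  have "(\<integral>\<^sup>+w. (\<integral>\<^sup>+t. \<rho> (w + Q t) * indicator {0..1} t \<partial>lborel) * indicator W w \<partial>lborel)
      = (\<integral>\<^sup>+t. (\<integral>\<^sup>+w. \<rho> (w + Q t) * indicator W w \<partial>lborel) * indicator {0..1} t \<partial>lborel)"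
    by (rule nn_integral_swap_indicator) measurable
  also have "\<dots> \<le> (\<integral>\<^sup>+t. (ennreal \<Lambda> * ?N + ennreal (\<Lambda> powr (- 1 / (p - 1))) * emeasure lborel W)
      * indicator {0..1::real} t \<partial>lborel)"
  proof (rule nn_integral_mono)
    fix t :: real
    have "(\<integral>\<^sup>+w. \<rho> (w + Q t) * indicator W w \<partial>lborel)
        \<le> (\<integral>\<^sup>+w. ennreal \<Lambda> * enn_powr (\<rho> (w + Q t)) p
              + ennreal (\<Lambda> powr (- 1 / (p - 1))) * indicator W w \<partial>lborel)"
      using young_enn_powr_bound[OF p \<Lambda>] by (intro nn_integral_mono) (auto simp: indicator_def)
    also have "\<dots> = ennreal \<Lambda> * (\<integral>\<^sup>+w. enn_powr (\<rho> (w + Q t)) p \<partial>lborel)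
        + ennreal (\<Lambda> powr (- 1 / (p - 1))) * emeasure lborel W"
      by (subst nn_integral_add) (auto simp: nn_integral_cmult)
    also have "(\<integral>\<^sup>+w. enn_powr (\<rho> (w + Q t)) p \<partial>lborel) = ?N"
      using nn_integral_lborel_affine[of "\<lambda>z. enn_powr (\<rho> z) p" 1 "Q t"] by (simp add: add.commute)
    finally show "(\<integral>\<^sup>+w. \<rho> (w + Q t) * indicator W w \<partial>lborel) * indicator {0..1} t
      \<le> (ennreal \<Lambda> * ?N + ennreal (\<Lambda> powr (- 1 / (p - 1))) * emeasure lborel W) * indicator {0..1} t"
      by (cases "t \<in> {0..1}") simp_all
  qed
  also have "\<dots> = ennreal \<Lambda> * ?N + ennreal (\<Lambda> powr (- 1 / (p - 1))) * emeasure lborel W"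
    by (simp add: nn_integral_cmult_indicator)
  finally show ?thesis .
qed

section \<open>Energy lower bound from the averaged admissibility inequality\<close>

lemma lipschitz_on_dist: "1-lipschitz_on U (dist x)"
  by (rule lipschitz_onI) (simp_all add: dist_real_def, metis abs_dist_diff_le dist_commute)

lemma emeasure_le_nn_integral_of_ge_one:
  assumes "W \<in> sets M" "\<And>w. w \<in> W \<Longrightarrow> 1 \<le> f w"
  shows "emeasure M W \<le> (\<integral>\<^sup>+w. f w * indicator W w \<partial>M)"
proof -
  have "emeasure M W = (\<integral>\<^sup>+w. indicator W w \<partial>M)" using assms(1) by simp
  also have "\<dots> \<le> (\<integral>\<^sup>+w. f w * indicator W w \<partial>M)"
    using assms(2) by (intro nn_integral_mono) (simp split: split_indicator)
  finally show ?thesis .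
qed

lemma joining_paths_average_bound:
  fixes \<rho> :: "'a::euclidean_space \<Rightarrow> ennreal" and Q :: "real \<Rightarrow> 'a"
  assumes [measurable]: "\<rho> \<in> borel_measurable borel" "Q \<in> borel_measurable borel" "W \<in> sets borel"
    and p: "p > 1" and \<Lambda>: "\<Lambda> > 0" and \<alpha>: "\<alpha> < p - 1"
    and paths: "\<And>w. w \<in> W \<Longrightarrow> norm (w - u) \<le> R \<and> norm (w + Q 1 - v) \<le> R \<and>
      1 \<le> ennreal K * ((\<integral>\<^sup>+t. \<rho> (u + t *\<^sub>R (w - u)) * indicator {0..1} t \<partial>lborel)
        + (\<integral>\<^sup>+t. \<rho> (w + Q t) * indicator {0..1} t \<partial>lborel)
        + (\<integral>\<^sup>+t. \<rho> (v + t *\<^sub>R (w + Q 1 - v)) * indicator {0..1} t \<partial>lborel))"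
  shows "emeasure lborel W \<le> ennreal K * (ennreal \<Lambda> * segment_majorant p \<alpha> \<rho> (dist x) R (dist x u)
      + ennreal \<Lambda> * segment_majorant p \<alpha> \<rho> (dist a) R (dist a v)
      + ennreal \<Lambda> * (\<integral>\<^sup>+z. enn_powr (\<rho> z) p \<partial>lborel)
      + ennreal (2 * (\<Lambda> powr (- 1 / (p - 1)) / (1 - \<alpha> / (p - 1))) + \<Lambda> powr (- 1 / (p - 1)))
        * emeasure lborel W)"
proof -
  let ?I1 = "\<lambda>w. \<integral>\<^sup>+t. \<rho> (u + t *\<^sub>R (w - u)) * indicator {0..1} t \<partial>lborel"
  let ?I2 = "\<lambda>w. \<integral>\<^sup>+t. \<rho> (w + Q t) * indicator {0..1} t \<partial>lborel"
  let ?I3 = "\<lambda>w. \<integral>\<^sup>+t. \<rho> (v + t *\<^sub>R (w + Q 1 - v)) * indicator {0..1} t \<partial>lborel"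
  let ?cW = "\<Lambda> powr (- 1 / (p - 1)) / (1 - \<alpha> / (p - 1))"
  have "emeasure lborel W \<le> (\<integral>\<^sup>+w. ennreal K * (?I1 w + ?I2 w + ?I3 w) * indicator W w \<partial>lborel)"
    using paths by (intro emeasure_le_nn_integral_of_ge_one) auto
  also have "\<dots> = ennreal K * ((\<integral>\<^sup>+w. ?I1 w * indicator W w \<partial>lborel)
      + (\<integral>\<^sup>+w. ?I2 w * indicator W w \<partial>lborel) + (\<integral>\<^sup>+w. ?I3 w * indicator W w \<partial>lborel))"
    by (simp add: nn_integral_cmult nn_integral_add distrib_right mult.assoc)
  also have "\<dots> \<le> ennreal K * ((ennreal \<Lambda> * segment_majorant p \<alpha> \<rho> (dist x) R (dist x u)
        + ennreal ?cW * emeasure lborel W)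
      + (ennreal \<Lambda> * (\<integral>\<^sup>+z. enn_powr (\<rho> z) p \<partial>lborel)
        + ennreal (\<Lambda> powr (- 1 / (p - 1))) * emeasure lborel W)
      + (ennreal \<Lambda> * segment_majorant p \<alpha> \<rho> (dist a) R (dist a v) + ennreal ?cW * emeasure lborel W))"
    using paths
    by (intro mult_left_mono add_mono segment_family_bound[where c = 0, unfolded add_0_right] segment_family_bound
        translate_family_bound lipschitz_on_dist)
      (auto simp: p \<Lambda> \<alpha>)
  also have "\<dots> = ennreal K * (ennreal \<Lambda> * segment_majorant p \<alpha> \<rho> (dist x) R (dist x u)
      + ennreal \<Lambda> * segment_majorant p \<alpha> \<rho> (dist a) R (dist a v)
      + ennreal \<Lambda> * (\<integral>\<^sup>+z. enn_powr (\<rho> z) p \<partial>lborel)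
      + ennreal (2 * ?cW + \<Lambda> powr (- 1 / (p - 1))) * emeasure lborel W)"
  proof -
    have "\<alpha> / (p - 1) < 1" using \<alpha> p by (simp add: divide_less_eq)
    then have "0 \<le> ?cW" by simp
    then have "ennreal (2 * ?cW + \<Lambda> powr (- 1 / (p - 1))) = ennreal ?cW + ennreal (\<Lambda> powr (- 1 / (p - 1))) + ennreal ?cW"
      by (simp add: ennreal_plus[symmetric] del: ennreal_plus)
    then show ?thesis by (simp only: distrib_right) (simp add: ac_simps)
  qed
  finally show ?thesis .
qed

lemma nn_integral_average_le:
  fixes f g :: "real \<Rightarrow> ennreal"
  assumes [measurable]: "f \<in> borel_measurable borel" "g \<in> borel_measurable borel" and d: "0 < d"
    and le: "\<And>s \<sigma>. s \<in> {0..d} \<Longrightarrow> \<sigma> \<in> {0..d} \<Longrightarrow> c \<le> f s + g \<sigma> + e"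
  shows "ennreal d * c \<le> (\<integral>\<^sup>+s. f s * indicator {0..d} s \<partial>lborel)
    + (\<integral>\<^sup>+\<sigma>. g \<sigma> * indicator {0..d} \<sigma> \<partial>lborel) + ennreal d * e"
proof -
  let ?F = "\<integral>\<^sup>+s. f s * indicator {0..d} s \<partial>lborel"
  let ?G = "\<integral>\<^sup>+\<sigma>. g \<sigma> * indicator {0..d} \<sigma> \<partial>lborel"
  have integrate: "ennreal d * b \<le> (\<integral>\<^sup>+s. h s * indicator {0..d} s \<partial>lborel) + ennreal d * k"
    if [measurable]: "h \<in> borel_measurable borel" and "\<And>s. s \<in> {0..d} \<Longrightarrow> b \<le> h s + k" for b k h
  proof -
    have "ennreal d * b = (\<integral>\<^sup>+s. b * indicator {0..d} s \<partial>lborel)"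
      using d by (simp add: nn_integral_cmult_indicator mult.commute)
    also have "\<dots> \<le> (\<integral>\<^sup>+s. h s * indicator {0..d} s + k * indicator {0..d} s \<partial>lborel)"
      using that(2) by (intro nn_integral_mono) (simp split: split_indicator)
    also have "\<dots> = (\<integral>\<^sup>+s. h s * indicator {0..d} s \<partial>lborel) + ennreal d * k"
      using d by (simp add: nn_integral_add nn_integral_cmult_indicator mult.commute)
    finally show ?thesis .
  qed
  have "ennreal d * c \<le> ?F + ennreal d * (g \<sigma> + e)" if "\<sigma> \<in> {0..d}" for \<sigma>
    using le[OF _ that] by (intro integrate) (simp_all add: add.assoc)
  then have "ennreal d * (ennreal d * c)
      \<le> (\<integral>\<^sup>+\<sigma>. ennreal d * g \<sigma> * indicator {0..d} \<sigma> \<partial>lborel) + ennreal d * (?F + ennreal d * e)"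
    by (intro integrate) (simp_all add: algebra_simps)
  also have "\<dots> = ennreal d * (?F + ?G + ennreal d * e)"
    by (simp add: nn_integral_cmult mult.assoc algebra_simps)
  finally show ?thesis
    using d by (simp add: ennreal_mult_le_mult_iff)
qed

lemma ennreal_le_absorb_half:
  fixes N :: ennreal
  assumes "ennreal x \<le> ennreal B * N + ennreal (x / 2)" and "0 < B" "0 \<le> x"
  shows "ennreal (x / (2 * B)) \<le> N"
proof (cases N)
  case (real y)
  have nonneg: "0 \<le> B * y + x / 2" using assms real by simp
  have "ennreal x \<le> ennreal (B * y + x / 2)"
    using assms real by (simp add: ennreal_mult)
  then have "x \<le> B * y + x / 2"
    by (simp only: ennreal_le_iff[OF nonneg])
  then show ?thesis
    using assms real by (simp add: field_simps)
qed simp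

lemma energy_bound_from_averages:
  fixes f g :: "real \<Rightarrow> ennreal" and N :: ennreal
  assumes [measurable]: "f \<in> borel_measurable borel" "g \<in> borel_measurable borel"
    and pos: "0 < d" "0 < K" "0 < \<Lambda>" "0 \<le> C" "0 \<le> m"
    and pointwise: "\<And>s \<sigma>. s \<in> {0..d} \<Longrightarrow> \<sigma> \<in> {0..d} \<Longrightarrow>
      ennreal m \<le> f s + g \<sigma> + ennreal K * (ennreal \<Lambda> * N + ennreal (1 / (2 * K)) * ennreal m)"
    and f: "(\<integral>\<^sup>+s. f s * indicator {0..d} s \<partial>lborel) \<le> ennreal (K * \<Lambda> * C) * N"
    and g: "(\<integral>\<^sup>+s. g s * indicator {0..d} s \<partial>lborel) \<le> ennreal (K * \<Lambda> * C) * N"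
  shows "ennreal (d * m / (2 * (K * \<Lambda> * (2 * C + d)))) \<le> N"
proof (rule ennreal_le_absorb_half)
  have "ennreal (d * m) = ennreal d * ennreal m" using pos by (simp add: ennreal_mult)
  also have "\<dots> \<le> (\<integral>\<^sup>+s. f s * indicator {0..d} s \<partial>lborel) + (\<integral>\<^sup>+s. g s * indicator {0..d} s \<partial>lborel)
      + ennreal d * (ennreal K * (ennreal \<Lambda> * N + ennreal (1 / (2 * K)) * ennreal m))"
    by (rule nn_integral_average_le) (use pos pointwise in auto)
  also have "\<dots> \<le> ennreal (K * \<Lambda> * C) * N + ennreal (K * \<Lambda> * C) * N
      + ennreal d * (ennreal K * (ennreal \<Lambda> * N + ennreal (1 / (2 * K)) * ennreal m))"
    by (intro add_mono f g order_refl)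
  also have "\<dots> = ennreal (K * \<Lambda> * (2 * C + d)) * N + ennreal (d * m / 2)"
  proof -
    have "ennreal d * (ennreal K * (ennreal \<Lambda> * N)) = ennreal (d * K * \<Lambda>) * N"
      using pos by (simp add: ennreal_mult mult.assoc)
    moreover have "ennreal d * (ennreal K * (ennreal (1 / (2 * K)) * ennreal m)) = ennreal (d * m / 2)"
      using pos by (simp add: ennreal_mult[symmetric])
    moreover have "ennreal (K * \<Lambda> * (2 * C + d))
        = ennreal (K * \<Lambda> * C) + ennreal (K * \<Lambda> * C) + ennreal (d * K * \<Lambda>)"
      using pos by (simp add: ennreal_plus[symmetric] algebra_simps del: ennreal_plus)
    ultimately show ?thesis by (simp add: distrib_left distrib_right add.assoc)
  qed
  finally show "ennreal (d * m) \<le> ennreal (K * \<Lambda> * (2 * C + d)) * N + ennreal (d * m / 2)" .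
qed (use pos in auto)

text \<open>\<open>\<alpha>\<close> is the midpoint of \<open>(n - 2, p - 1)\<close>, nonempty as \<open>p > n - 1\<close>; it is the exponent of the
  weight \<open>\<Lambda> t\<^sup>\<alpha>\<close> in Young's inequality. The factor \<open>\<Lambda>\<close> is chosen so that the measure terms
  produced by Young's inequality absorb half of the averaged admissibility inequality.\<close>
definition joining_modulus_bound :: "real \<Rightarrow> real \<Rightarrow> real \<Rightarrow> real \<Rightarrow> real \<Rightarrow> real" where
  "joining_modulus_bound n p d K m =
    (let \<alpha> = (p + n - 3) / 2; \<Lambda> = (2 * K * (2 / (1 - \<alpha> / (p - 1)) + 1)) powr (p - 1)
     in d * m / (2 * (K * \<Lambda> * (2 * (2 * K / (\<alpha> - n + 2)) + d))))"

lemma joining_modulus_bound_pos: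
  assumes "n - 1 < p" "1 < p" "0 < d" "0 < K" "0 < m"
  shows "0 < joining_modulus_bound n p d K m"
proof -
  define \<alpha> where "\<alpha> = (p + n - 3) / 2"
  define X where "X = 2 / (1 - \<alpha> / (p - 1)) + 1"
  define C where "C = 2 * K / (\<alpha> - n + 2)"
  have "\<alpha> / (p - 1) < 1" "0 < \<alpha> - n + 2"
    using assms by (simp_all add: \<alpha>_def divide_less_eq field_simps)
  then have "0 < X" "0 < C"
    unfolding X_def C_def using assms by (auto intro!: add_pos_pos divide_pos_pos)
  moreover have "joining_modulus_bound n p d K m = d * m / (2 * (K * (2 * K * X) powr (p - 1) * (2 * C + d)))"
    unfolding joining_modulus_bound_def Let_def \<alpha>_def[symmetric] X_def[symmetric] C_def[symmetric] ..
  ultimately show ?thesis using assms by simp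
qed

lemma joining_paths_energy_bound:
  fixes W :: "'a::euclidean_space set" and \<rho> :: "'a \<Rightarrow> ennreal" and Q :: "real \<Rightarrow> 'a"
  assumes p: "real DIM('a) - 1 < p" "1 < p" and d: "0 < d" and K: "0 < K"
    and [measurable]: "W \<in> sets borel" and W: "emeasure lborel W = ennreal m" "0 < m"
    and [measurable]: "\<rho> \<in> borel_measurable borel" "Q \<in> borel_measurable borel"
    and u: "\<And>s. s \<in> {0..d} \<Longrightarrow> dist x (u s) = s" and v: "\<And>\<sigma>. \<sigma> \<in> {0..d} \<Longrightarrow> dist a (v \<sigma>) = \<sigma>"
    and paths: "\<And>s \<sigma> w. s \<in> {0..d} \<Longrightarrow> \<sigma> \<in> {0..d} \<Longrightarrow> w \<in> W \<Longrightarrow>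
      norm (w - u s) \<le> K \<and> norm (w + Q 1 - v \<sigma>) \<le> K \<and>
      1 \<le> ennreal K * ((\<integral>\<^sup>+t. \<rho> (u s + t *\<^sub>R (w - u s)) * indicator {0..1} t \<partial>lborel)
        + (\<integral>\<^sup>+t. \<rho> (w + Q t) * indicator {0..1} t \<partial>lborel)
        + (\<integral>\<^sup>+t. \<rho> (v \<sigma> + t *\<^sub>R (w + Q 1 - v \<sigma>)) * indicator {0..1} t \<partial>lborel))"
  shows "ennreal (joining_modulus_bound (real DIM('a)) p d K m) \<le> (\<integral>\<^sup>+z. enn_powr (\<rho> z) p \<partial>lborel)"
proof -
  define \<alpha> where "\<alpha> = (p + real DIM('a) - 3) / 2"
  define X where "X = 2 / (1 - \<alpha> / (p - 1)) + 1"
  define \<Lambda> where "\<Lambda> = (2 * K * X) powr (p - 1)"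
  define C where "C = 2 * K / (\<alpha> - real DIM('a) + 2)"
  have \<alpha>: "real DIM('a) - 2 < \<alpha>" "\<alpha> < p - 1" and "\<alpha> / (p - 1) < 1"
    using p by (auto simp: \<alpha>_def divide_less_eq)
  then have "0 < X" unfolding X_def by (intro add_pos_pos divide_pos_pos) auto
  then have pos: "0 < X" "0 < \<Lambda>" "0 < C"
    using K \<alpha> by (simp_all add: \<Lambda>_def C_def)
  have half: "2 * (\<Lambda> powr (- 1 / (p - 1)) / (1 - \<alpha> / (p - 1))) + \<Lambda> powr (- 1 / (p - 1)) = 1 / (2 * K)"
  proof -
    have \<Lambda>': "\<Lambda> powr (- 1 / (p - 1)) = 1 / (2 * K * X)"
      using K pos p by (simp add: \<Lambda>_def powr_powr powr_minus_divide)
    have X: "2 * (c / (1 - \<alpha> / (p - 1))) + c = c * X" for c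
      unfolding X_def by (simp add: algebra_simps)
    show ?thesis
      unfolding \<Lambda>' X using pos by simp
  qed
  let ?B = "\<lambda>y s. ennreal (K * \<Lambda>) * segment_majorant p \<alpha> \<rho> (dist y) K s"
  have majorant: "(\<integral>\<^sup>+s. ?B y s * indicator {0..d} s \<partial>lborel) \<le> ennreal (K * \<Lambda> * C) * (\<integral>\<^sup>+z. enn_powr (\<rho> z) p \<partial>lborel)"
    for y
  proof -
    have "(\<integral>\<^sup>+s. ?B y s * indicator {0..d} s \<partial>lborel) \<le> (\<integral>\<^sup>+s. ?B y s \<partial>lborel)"
      by (intro nn_integral_mono) (simp split: split_indicator)
    also have "\<dots> = ennreal (K * \<Lambda>) * (ennreal C * (\<integral>\<^sup>+z. enn_powr (\<rho> z) p \<partial>lborel))"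
      using K \<alpha> by (simp add: nn_integral_cmult segment_majorant_integral lipschitz_on_dist C_def)
    finally show ?thesis using K pos by (simp add: ennreal_mult mult.assoc)
  qed
  have "joining_modulus_bound (real DIM('a)) p d K m = d * m / (2 * (K * \<Lambda> * (2 * C + d)))"
    unfolding joining_modulus_bound_def Let_def \<alpha>_def[symmetric] X_def[symmetric] \<Lambda>_def[symmetric]
      C_def[symmetric] ..
  also have "ennreal \<dots> \<le> (\<integral>\<^sup>+z. enn_powr (\<rho> z) p \<partial>lborel)"
  proof (rule energy_bound_from_averages[OF _ _ d K _ _ _ _ majorant majorant])
    fix s \<sigma> assume "s \<in> {0..d}" "\<sigma> \<in> {0..d}"
    then show "ennreal m \<le> ?B x s + ?B a \<sigma> + ennreal K * (ennreal \<Lambda> * (\<integral>\<^sup>+z. enn_powr (\<rho> z) p \<partial>lborel)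
        + ennreal (1 / (2 * K)) * ennreal m)"
      using joining_paths_average_bound[of \<rho> Q W p \<Lambda> \<alpha> "u s" K "v \<sigma>" K x a] paths u v p K pos \<alpha> W
      unfolding half by (simp add: ennreal_mult distrib_left mult.assoc add.assoc)
  qed (use pos W in auto)
  finally show ?thesis .
qed

lemma p_modulus_geI:
  "(\<And>\<rho>. admissible \<Gamma> \<rho> \<Longrightarrow> c \<le> (\<integral>\<^sup>+z. enn_powr (\<rho> z) p \<partial>lborel)) \<Longrightarrow> c \<le> p_modulus p \<Gamma>"
  unfolding p_modulus_def by (rule INF_greatest) simp

lemma joining_families_modulus_bound:
  fixes W :: "'a::euclidean_space set" and Q :: "real \<Rightarrow> 'a"
  assumes p: "real DIM('a) - 1 < p" "1 < p" and d: "0 < d" and K: "0 < K"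
    and W: "W \<in> sets borel" "emeasure lborel W = ennreal m" "0 < m"
    and Q: "Q \<in> borel_measurable borel" "L-lipschitz_on {0..1} Q" "L \<le> K" "Q 0 = 0"
    and u: "\<And>s. s \<in> {0..d} \<Longrightarrow> u s \<in> E \<and> dist x (u s) = s"
    and v: "\<And>\<sigma>. \<sigma> \<in> {0..d} \<Longrightarrow> v \<sigma> \<in> F \<and> dist a (v \<sigma>) = \<sigma>"
    and first: "\<And>s w t. s \<in> {0..d} \<Longrightarrow> w \<in> W \<Longrightarrow> t \<in> {0<..1} \<Longrightarrow>
      norm (w - u s) \<le> K \<and> u s + t *\<^sub>R (w - u s) \<in> G"
    and middle: "\<And>w t. w \<in> W \<Longrightarrow> t \<in> {0..1} \<Longrightarrow> w + Q t \<in> G"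
    and last: "\<And>\<sigma> w t. \<sigma> \<in> {0..d} \<Longrightarrow> w \<in> W \<Longrightarrow> t \<in> {0<..1} \<Longrightarrow>
      norm (w + Q 1 - v \<sigma>) \<le> K \<and> v \<sigma> + t *\<^sub>R (w + Q 1 - v \<sigma>) \<in> G"
  shows "ennreal (joining_modulus_bound (real DIM('a)) p d K m) \<le> p_modulus p (path_family E F G)"
proof (rule p_modulus_geI)
  fix \<rho> assume adm: "admissible (path_family E F G) \<rho>"
  show "ennreal (joining_modulus_bound (real DIM('a)) p d K m) \<le> (\<integral>\<^sup>+z. enn_powr (\<rho> z) p \<partial>lborel)"
  proof (rule joining_paths_energy_bound[OF p d K W _ Q(1)])
    show "\<rho> \<in> borel_measurable borel" using adm by (simp add: admissible_def)
    fix s \<sigma> w assume "s \<in> {0..d}" "\<sigma> \<in> {0..d}" "w \<in> W"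
    then show "norm (w - u s) \<le> K \<and> norm (w + Q 1 - v \<sigma>) \<le> K \<and> 1 \<le> ennreal K * (
        (\<integral>\<^sup>+t. \<rho> (u s + t *\<^sub>R (w - u s)) * indicator {0..1} t \<partial>lborel)
      + (\<integral>\<^sup>+t. \<rho> (w + Q t) * indicator {0..1} t \<partial>lborel)
      + (\<integral>\<^sup>+t. \<rho> (v \<sigma> + t *\<^sub>R (w + Q 1 - v \<sigma>)) * indicator {0..1} t \<partial>lborel))"
      using first[of s w 1] last[of \<sigma> w 1] u v first last middle
      by (auto intro!: admissible_segment_translate_segment_bound[OF adm Q])
  qed (use u v in auto)
qed

section \<open>The joining paths in the domain\<close>

lemma connected_dist_section:
  fixes C :: "'a::real_normed_vector set"
  assumes "connected C" "x \<in> C" "y \<in> C"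
  obtains u where "\<And>s. s \<in> {0..dist x y} \<Longrightarrow> u s \<in> C \<and> dist x (u s) = s"
proof -
  have "connected (dist x ` C)"
    by (rule connected_continuous_image) (auto intro!: continuous_intros assms)
  then have "{dist x x..dist x y} \<subseteq> dist x ` C"
    by (rule connected_contains_Icc) (use assms in auto)
  then have "\<forall>s\<in>{0..dist x y}. \<exists>u\<in>C. dist x u = s" by force
  then show ?thesis using that by metis
qed

lemma chordal_le_dist:
  fixes x y :: "'a::real_normed_vector"
  shows "chordal x y \<le> dist x y"
proof -
  have "1 \<le> sqrt (1 + (norm x)\<^sup>2)" "1 \<le> sqrt (1 + (norm y)\<^sup>2)" by auto
  then have "1 \<le> sqrt (1 + (norm x)\<^sup>2) * sqrt (1 + (norm y)\<^sup>2)"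
    by (metis mult_mono' mult_1 zero_le_one)
  then show ?thesis
    unfolding chordal_def dist_norm
    by (simp add: divide_le_eq_1 divide_le_cancel order_trans[OF _ mult_left_mono] field_simps)
      (metis mult_left_mono mult.right_neutral norm_ge_zero)
qed

lemma chordal_diam_far_points:
  fixes C :: "'a::real_normed_vector set"
  assumes "C \<noteq> {}" "r \<le> chordal_diam C" "0 < r"
  obtains x y where "x \<in> C" "y \<in> C" "r / 2 < dist x y"
proof -
  have "\<exists>x\<in>C. \<exists>y\<in>C. r / 2 < chordal x y"
  proof (rule ccontr)
    assume "\<not> ?thesis"
    then have "\<forall>z \<in> {chordal x y | x y. x \<in> C \<and> y \<in> C}. z \<le> r / 2" by (auto simp: not_less)
    moreover have "{chordal x y | x y. x \<in> C \<and> y \<in> C} \<noteq> {}" using assms(1) by auto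
    ultimately have "chordal_diam C \<le> r / 2" unfolding chordal_diam_def by (intro cSup_least) auto
    then show False using assms by simp
  qed
  then show ?thesis using that chordal_le_dist by (meson less_le_trans)
qed

lemma polynomial_function_lipschitz_on:
  fixes P :: "real \<Rightarrow> 'a::euclidean_space"
  assumes "polynomial_function P"
  obtains B where "B-lipschitz_on {a..b} P"
proof -
  obtain P' where P': "polynomial_function P'" "\<And>x. (P has_vector_derivative (P' x)) (at x)"
    using has_vector_derivative_polynomial_function[OF assms] by blast
  have "compact (P' ` {a..b})"
    by (rule compact_continuous_image) (auto intro: continuous_on_polymonial_function[OF P'(1)])
  then obtain B where B: "\<And>x. x \<in> {a..b} \<Longrightarrow> norm (P' x) \<le> B"
    by (meson compact_imp_bounded bounded_iff image_eqI)
  have "norm (P x - P y) \<le> max B 0 * norm (x - y)" if "x \<in> {a..b}" "y \<in> {a..b}" for x y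
  proof (rule differentiable_bound[where f' = "\<lambda>x h. h *\<^sub>R P' x" and S="{a..b}"])
    show "(P has_derivative (\<lambda>h. h *\<^sub>R P' x)) (at x within {a..b})" for x
      using P'(2)[of x] by (simp add: has_vector_derivative_def has_derivative_at_withinI)
    show "onorm (\<lambda>h. h *\<^sub>R P' x) \<le> max B 0" if "x \<in> {a..b}" for x
      using onorm_scaleR_left[OF bounded_linear_ident, of "P' x"] B[OF that] by (simp add: onorm_id)
  qed (use that in auto)
  then show ?thesis
    using that by (metis lipschitz_onI dist_norm max.cobounded2)
qed

lemma segment_in_ball:
  fixes u w :: "'a::real_normed_vector"
  assumes "u \<in> ball c \<epsilon>" "w \<in> ball c \<epsilon>" "t \<in> {0..1}"
  shows "u + t *\<^sub>R (w - u) \<in> ball c \<epsilon>" "norm (w - u) < 2 * \<epsilon>"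
proof -
  show "u + t *\<^sub>R (w - u) \<in> ball c \<epsilon>"
    using convexD_alt[OF convex_ball assms(1,2), of t] assms(3) by (simp add: algebra_simps)
  show "norm (w - u) < 2 * \<epsilon>"
    using dist_triangle[of w u c] assms(1,2) by (simp add: dist_norm norm_minus_commute)
qed

lemma paths_from_ball_to_continuum:
  fixes x0 :: "'a::euclidean_space"
  assumes D: "open D" "connected D" "x0 \<in> D" and A: "connected A" "nondegenerate A" "A \<subseteq> D"
  obtains \<delta> \<theta> and Q :: "real \<Rightarrow> 'a" and L v a R
  where "0 < \<delta>" "0 < \<theta>" "Q \<in> borel_measurable borel" "L-lipschitz_on {0..1} Q" "Q 0 = 0"
    "\<And>\<sigma>. \<sigma> \<in> {0..\<delta>} \<Longrightarrow> v \<sigma> \<in> A \<and> dist a (v \<sigma>) = \<sigma>"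
    "\<And>w t. w \<in> ball x0 \<theta> \<Longrightarrow> t \<in> {0..1} \<Longrightarrow> w + Q t \<in> D"
    "\<And>\<sigma> w t. \<sigma> \<in> {0..\<delta>} \<Longrightarrow> w \<in> ball x0 \<theta> \<Longrightarrow> t \<in> {0<..1} \<Longrightarrow>
      norm (w + Q 1 - v \<sigma>) \<le> R \<and> v \<sigma> + t *\<^sub>R (w + Q 1 - v \<sigma>) \<in> D"
proof -
  obtain a b where ab: "a \<in> A" "b \<in> A" "a \<noteq> b"
    using A(2) unfolding nondegenerate_def by blast
  obtain \<eta> where \<eta>: "0 < \<eta>" "ball a \<eta> \<subseteq> D"
    using D(1) A(3) ab(1) open_contains_ball by blast
  define \<delta> where "\<delta> = min (dist a b) \<eta> / 2"
  have \<delta>: "0 < \<delta>" "\<delta> \<le> dist a b" "\<delta> < \<eta>"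
    using ab \<eta> zero_le_dist[of a b] by (auto simp: \<delta>_def min_def)
  obtain v where v: "\<And>\<sigma>. \<sigma> \<in> {0..dist a b} \<Longrightarrow> v \<sigma> \<in> A \<and> dist a (v \<sigma>) = \<sigma>"
    using connected_dist_section[OF A(1) ab(1,2)] by blast
  obtain P where P: "polynomial_function P" "path_image P \<subseteq> D" "pathstart P = x0" "pathfinish P = a"
    using connected_open_polynomial_connected[OF D] ab(1) A(3) by blast
  have [measurable]: "P \<in> borel_measurable borel"
    using continuous_on_polymonial_function[OF P(1)] by (simp add: borel_measurable_continuous_onI)
  obtain L where L: "L-lipschitz_on {0..1} P"
    using polynomial_function_lipschitz_on[OF P(1)] by blast
  obtain e where e: "0 < e" "(\<Union>x\<in>path_image P. ball x e) \<subseteq> D"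
    using compact_subset_open_imp_ball_epsilon_subset[OF compact_path_image D(1) P(2)]
      path_polynomial_function[OF P(1)] by blast
  define \<theta> where "\<theta> = min e (\<eta> / 2)"
  show ?thesis
  proof (rule that[of \<delta> \<theta> "\<lambda>t. P t - x0" L v a "2 * \<eta>"])
    show "0 < \<delta>" "0 < \<theta>" using \<delta> e \<eta> by (auto simp: \<theta>_def)
    show "(\<lambda>t. P t - x0) \<in> borel_measurable borel" by measurable
    show "L-lipschitz_on {0..1} (\<lambda>t. P t - x0)" using L by (simp add: lipschitz_on_def dist_norm)
    show "P 0 - x0 = 0" using P(3) by (simp add: pathstart_def)
    show "v \<sigma> \<in> A \<and> dist a (v \<sigma>) = \<sigma>" if "\<sigma> \<in> {0..\<delta>}" for \<sigma>
      using v that \<delta> by auto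
    fix w assume w: "w \<in> ball x0 \<theta>"
    show "w + (P t - x0) \<in> D" if "t \<in> {0..1}" for t
    proof -
      have "P t \<in> path_image P" using that by (simp add: path_image_def)
      moreover have "w + (P t - x0) \<in> ball (P t) e"
        using w by (simp add: \<theta>_def dist_norm algebra_simps norm_minus_commute)
      ultimately show ?thesis using e(2) by blast
    qed
    fix \<sigma> and t :: real assume "\<sigma> \<in> {0..\<delta>}" "t \<in> {0<..1}"
    then have "v \<sigma> \<in> ball a \<eta>" "w + (P 1 - x0) \<in> ball a \<eta>" "t \<in> {0..1}"
      using v[of \<sigma>] \<delta> w P(4) by (auto simp: pathfinish_def \<theta>_def dist_norm norm_minus_commute)
    from segment_in_ball[OF this] \<eta>(2)
    show "norm (w + (P 1 - x0) - v \<sigma>) \<le> 2 * \<eta> \<and> v \<sigma> + t *\<^sub>R (w + (P 1 - x0) - v \<sigma>) \<in> D"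
      by auto
  qed
qed

lemma modulus_lower_bound_continua_in_ball:
  fixes x0 :: "'a::euclidean_space"
  assumes p: "real DIM('a) - 1 < p" "1 < p"
    and D: "open D" "connected D" "ball x0 \<epsilon> \<subseteq> D" "0 < \<epsilon>"
    and A: "connected A" "nondegenerate A" "A \<subseteq> D" and "0 < r"
  obtains R0 where "0 < R0"
    "\<And>E x y. connected E \<Longrightarrow> E \<subseteq> ball x0 \<epsilon> \<Longrightarrow> x \<in> E \<Longrightarrow> y \<in> E \<Longrightarrow> r \<le> dist x y \<Longrightarrow>
      ennreal R0 \<le> p_modulus p (path_family E A D)"
proof -
  have "x0 \<in> D" using D(3,4) by auto
  obtain \<delta> \<theta> and Q :: "real \<Rightarrow> 'a" and L v a R where tube: "0 < \<delta>" "0 < \<theta>"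
      "Q \<in> borel_measurable borel" "L-lipschitz_on {0..1} Q" "Q 0 = 0"
      "\<And>\<sigma>. \<sigma> \<in> {0..\<delta>} \<Longrightarrow> v \<sigma> \<in> A \<and> dist a (v \<sigma>) = \<sigma>"
      "\<And>w t. w \<in> ball x0 \<theta> \<Longrightarrow> t \<in> {0..1} \<Longrightarrow> w + Q t \<in> D"
      "\<And>\<sigma> w t. \<sigma> \<in> {0..\<delta>} \<Longrightarrow> w \<in> ball x0 \<theta> \<Longrightarrow> t \<in> {0<..1} \<Longrightarrow>
        norm (w + Q 1 - v \<sigma>) \<le> R \<and> v \<sigma> + t *\<^sub>R (w + Q 1 - v \<sigma>) \<in> D"
    by (rule paths_from_ball_to_continuum[OF D(1,2) \<open>x0 \<in> D\<close> A]) (rule that)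
  define W where "W = ball x0 (min \<theta> \<epsilon>)"
  define d where "d = min \<delta> r"
  define K where "K = max L (max (2 * \<epsilon>) R)"
  have pos: "0 < d" "0 < K" "0 < measure lborel W"
    using tube D(4) \<open>0 < r\<close> by (auto simp: d_def K_def W_def intro: content_ball_pos[unfolded content_def])
  have W: "W \<in> sets borel" "emeasure lborel W = ennreal (measure lborel W)"
    unfolding W_def using emeasure_lborel_ball_finite
    by (simp, intro emeasure_eq_ennreal_measure) (simp add: less_top)
  show ?thesis
  proof (rule that)
    show "0 < joining_modulus_bound (real DIM('a)) p d K (measure lborel W)"
      using p pos by (intro joining_modulus_bound_pos) auto
    fix E x y assume E: "connected E" "E \<subseteq> ball x0 \<epsilon>" "x \<in> E" "y \<in> E" "r \<le> dist x y"
    obtain u where "\<And>s. s \<in> {0..dist x y} \<Longrightarrow> u s \<in> E \<and> dist x (u s) = s"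
      using connected_dist_section[OF E(1,3,4)] by blast
    then have u: "\<And>s. s \<in> {0..d} \<Longrightarrow> u s \<in> E \<and> dist x (u s) = s"
      using E(5) by (auto simp: d_def)
    show "ennreal (joining_modulus_bound (real DIM('a)) p d K (measure lborel W))
      \<le> p_modulus p (path_family E A D)"
    proof (rule joining_families_modulus_bound[OF p pos(1,2) W pos(3) tube(3,4) _ tube(5) u])
      show "L \<le> K" by (simp add: K_def)
      show "\<sigma> \<in> {0..d} \<Longrightarrow> v \<sigma> \<in> A \<and> dist a (v \<sigma>) = \<sigma>" for \<sigma>
        using tube(6) by (simp add: d_def)
      fix w t assume w: "w \<in> W"
      show "t \<in> {0..1} \<Longrightarrow> w + Q t \<in> D"
        using tube(7) w by (simp add: W_def)
      show "\<sigma> \<in> {0..d} \<Longrightarrow> t \<in> {0<..1} \<Longrightarrow>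
          norm (w + Q 1 - v \<sigma>) \<le> K \<and> v \<sigma> + t *\<^sub>R (w + Q 1 - v \<sigma>) \<in> D" for \<sigma>
        using tube(8)[of \<sigma> w t] w by (auto simp: W_def d_def K_def)
      fix s assume s: "s \<in> {0..d}" and "t \<in> {0<..1}"
      then have "u s \<in> ball x0 \<epsilon>" "w \<in> ball x0 \<epsilon>" "t \<in> {0..1}"
        using u[OF s] E(2) w by (auto simp: W_def)
      from segment_in_ball[OF this] D(3)
      show "norm (w - u s) \<le> K \<and> u s + t *\<^sub>R (w - u s) \<in> D"
        by (auto simp: K_def)
    qed
  qed
qed

theorem lemma3p1:
  fixes p \<epsilon>1 r :: real and x0 :: "real ^ 'n" and D A :: "(real ^ 'n) set"
    and C :: "nat \<Rightarrow> (real ^ 'n) set"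
  assumes "CARD('n) \<ge> 2"
    and "real CARD('n) - 1 < p" and "p \<le> real CARD('n)"
    and "\<epsilon>1 > 0"
    and "open D" and "connected D" and "ball x0 \<epsilon>1 \<subseteq> D"
    and "continuum A" and "nondegenerate A" and "A \<subseteq> D"
    and "r > 0"
    and "\<And>j. j \<ge> 1 \<Longrightarrow> continuum (C j) \<and> C j \<subseteq> ball x0 \<epsilon>1 \<and> chordal_diam (C j) \<ge> r"
  shows "\<exists>R0 > 0. \<forall>j \<ge> 1. p_modulus p (path_family (C j) A D) \<ge> ennreal R0"
proof -
  have p: "real DIM(real ^ 'n) - 1 < p" "1 < p" using assms(1,2) by auto
  have "connected A" using assms(8) by (simp add: continuum_def)
  obtain R0 where "0 < R0" and R0: "\<And>E x y. connected E \<Longrightarrow> E \<subseteq> ball x0 \<epsilon>1 \<Longrightarrow> x \<in> E \<Longrightarrow> y \<in> E \<Longrightarrow>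
      r / 2 \<le> dist x y \<Longrightarrow> ennreal R0 \<le> p_modulus p (path_family E A D)"
    using modulus_lower_bound_continua_in_ball[OF p assms(5,6,7,4) \<open>connected A\<close> assms(9,10), of "r / 2"]
      assms(11) by auto
  show ?thesis
  proof (intro exI[of _ R0] conjI allI impI \<open>0 < R0\<close>)
    fix j :: nat assume "1 \<le> j"
    then have Cj: "connected (C j)" "C j \<noteq> {}" "C j \<subseteq> ball x0 \<epsilon>1" "r \<le> chordal_diam (C j)"
      using assms(12) by (auto simp: continuum_def)
    obtain x y where "x \<in> C j" "y \<in> C j" "r / 2 < dist x y"
      using chordal_diam_far_points[OF Cj(2,4) assms(11)] .
    then show "ennreal R0 \<le> p_modulus p (path_family (C j) A D)"
      using R0[OF Cj(1,3)] by simp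
  qed
qed

end
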